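(* If $\Lambda$ is a Legendrian knot with $\operatorname{tb}(\Lambda)<0$, then $$m(\Lambda)\ge\left\lceil\sqrt{-\operatorname{tb}(\Lambda)-\tfrac34}+\tfrac32\right\rceil.$$
   Context: Legendrian knots are taken in the standard contact structure on $\mathbb{R}^3$ and represented by front ($xz$-) projections, which have cusps in place of vertical tangencies and in which the strand of more negative slope is the overstrand at every crossing. For an oriented front with $P$ positive crossings, $N$ negative crossings and $C$ cusps, the Thurston–Bennequin number is $\operatorname{tb}=P-N-\frac12C$, a Legendrian isotopy invariant. Legendrian mosaic tiles: a square tile whose four edge midpoints are potential connection points; the tiles are $T_0$ (empty); $T_1,\dots,T_4$ (a single arc joining midpoints of two adjacent edges, one per pair of adjacent edges); $T_5,T_6$ (a segment joining midpoints of opposite edges); $T_7,T_8$ (two disjoint arcs each joining adjacent edges, using all four midpoints); $T_{10}$ (two crossing segments joining opposite edges). A Legendrian $n$-mosaic is an $n\times n$ array of these tiles with the array rotated $45^\circ$ counterclockwise so the strands form a front diagram (after rotation $T_2$, $T_4$ contain one cusp and $T_8$ two cusps; $T_1,T_3,T_7$ contain none; in $T_{10}$ the negative-slope strand is over). It is suitably connected if connection points agree across shared edges and none lies on the outer boundary. The mosaic number $m(\Lambda)$ of a Legendrian knot $\Lambda$ is the smallest $n$ such that some suitably connected Legendrian $n$-mosaic depicts a front of a Legendrian knot Legendrian isotopic to $\Lambda$. *)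

theory Defs
  imports Complex_Main "HOL-Library.Extended_Nat"
begin

text \<open>Edges of a (non-rotated) tile: left, right, top, bottom.
  A mosaic is indexed M i j, row i counted from the top, column j from the left.\<close>
datatype edge = eL | eR | eT | eB

datatype tile = T0 | T1 | T2 | T3 | T4 | T5 | T6 | T7 | T8 | T10

text \<open>T1: left-bottom, T2: bottom-right, T3: right-top, T4: top-left (after the
  45 degree counterclockwise rotation T2 and T4 contain a cusp, T1 and T3 do not);
  T5 horizontal, T6 vertical; T7 = T1+T3; T8 = T2+T4; T10 = crossing, where the
  vertical (top-bottom) strand, which has negative slope after rotation, is over.\<close>
fun segs :: "tile \<Rightarrow> edge set set" where
  "segs T0 = {}"
| "segs T1 = {{eL, eB}}"
| "segs T2 = {{eB, eR}}"
| "segs T3 = {{eR, eT}}"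
| "segs T4 = {{eT, eL}}"
| "segs T5 = {{eL, eR}}"
| "segs T6 = {{eT, eB}}"
| "segs T7 = {{eL, eB}, {eR, eT}}"
| "segs T8 = {{eB, eR}, {eT, eL}}"
| "segs T10 = {{eL, eR}, {eT, eB}}"

definition has_conn :: "tile \<Rightarrow> edge \<Rightarrow> bool" where
  "has_conn t e \<longleftrightarrow> (\<exists>s\<in>segs t. e \<in> s)"

type_synonym mosaic = "nat \<Rightarrow> nat \<Rightarrow> tile"

definition suitably_connected :: "nat \<Rightarrow> mosaic \<Rightarrow> bool" where
  "suitably_connected n M \<longleftrightarrow>
     (\<forall>i<n. \<forall>j<n.
        (has_conn (M i j) eR \<longleftrightarrow> j + 1 < n \<and> has_conn (M i (j+1)) eL) \<and>
        (has_conn (M i j) eL \<longleftrightarrow> 0 < j \<and> has_conn (M i (j-1)) eR) \<and>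
        (has_conn (M i j) eB \<longleftrightarrow> i + 1 < n \<and> has_conn (M (i+1) j) eT) \<and>
        (has_conn (M i j) eT \<longleftrightarrow> 0 < i \<and> has_conn (M (i-1) j) eB))"

text \<open>An oriented segment (i, j, a, b): the strand in tile (i,j) entered through
  edge a and left through edge b.\<close>
type_synonym oseg = "nat \<times> nat \<times> edge \<times> edge"

definition valid_oseg :: "nat \<Rightarrow> mosaic \<Rightarrow> oseg \<Rightarrow> bool" where
  "valid_oseg n M s = (case s of (i, j, a, b) \<Rightarrow>
      i < n \<and> j < n \<and> a \<noteq> b \<and> {a, b} \<in> segs (M i j))"

definition linked :: "oseg \<Rightarrow> oseg \<Rightarrow> bool" where
  "linked s s' = (case s of (i, j, a, b) \<Rightarrow> case s' of (i', j', a', b') \<Rightarrow>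
      (case b of
         eR \<Rightarrow> i' = i \<and> j' = j + 1 \<and> a' = eL
       | eL \<Rightarrow> i' = i \<and> j' + 1 = j \<and> a' = eR
       | eB \<Rightarrow> i' = i + 1 \<and> j' = j \<and> a' = eT
       | eT \<Rightarrow> i' + 1 = i \<and> j' = j \<and> a' = eB))"

definition useg :: "oseg \<Rightarrow> nat \<times> nat \<times> edge set" where
  "useg s = (case s of (i, j, a, b) \<Rightarrow> (i, j, {a, b}))"

text \<open>A knot traversal: a single closed oriented curve passing through every strand
  segment of the mosaic exactly once (so the diagram has exactly one component).\<close>
definition knot_traversal :: "nat \<Rightarrow> mosaic \<Rightarrow> oseg list \<Rightarrow> bool" where
  "knot_traversal n M ss \<longleftrightarrow>
     ss \<noteq> [] \<and>
     (\<forall>k < length ss. valid_oseg n M (ss ! k) \<and>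
                      linked (ss ! k) (ss ! ((k + 1) mod length ss))) \<and>
     distinct (map useg ss) \<and>
     set (map useg ss) = {(i, j, s). i < n \<and> j < n \<and> s \<in> segs (M i j)}"

definition legendrian_knot_mosaic :: "nat \<Rightarrow> mosaic \<Rightarrow> bool" where
  "legendrian_knot_mosaic n M \<longleftrightarrow> suitably_connected n M \<and> (\<exists>ss. knot_traversal n M ss)"

definition num_cusps :: "nat \<Rightarrow> mosaic \<Rightarrow> nat" where
  "num_cusps n M = card {(i, j, s). i < n \<and> j < n \<and> s \<in> segs (M i j) \<and>
                                   (s = {eT, eL} \<or> s = {eB, eR})}"

text \<open>Sign of the crossing in a T10 tile (i,j) w.r.t. the orientation ss: with the
  over strand vertical and the under strand horizontal, the crossing is positive iff
  (over direction, under direction) is a positively oriented basis, i.e. iff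
  (over up and under leftward) or (over down and under rightward).\<close>
definition crossing_positive :: "oseg list \<Rightarrow> nat \<Rightarrow> nat \<Rightarrow> bool" where
  "crossing_positive ss i j \<longleftrightarrow> ((i, j, eB, eT) \<in> set ss \<longleftrightarrow> (i, j, eR, eL) \<in> set ss)"

definition num_pos :: "nat \<Rightarrow> mosaic \<Rightarrow> oseg list \<Rightarrow> nat" where
  "num_pos n M ss = card {(i, j). i < n \<and> j < n \<and> M i j = T10 \<and> crossing_positive ss i j}"

definition num_neg :: "nat \<Rightarrow> mosaic \<Rightarrow> oseg list \<Rightarrow> nat" where
  "num_neg n M ss = card {(i, j). i < n \<and> j < n \<and> M i j = T10 \<and> \<not> crossing_positive ss i j}"

definition front_tb :: "nat \<Rightarrow> mosaic \<Rightarrow> oseg list \<Rightarrow> real" where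
  "front_tb n M ss = real (num_pos n M ss) - real (num_neg n M ss) - real (num_cusps n M) / 2"

text \<open>Mosaic number, relative to the relation depicts n M L: "the n-mosaic M depicts
  a front of a Legendrian knot Legendrian isotopic to L". Infimum in enat (infinity
  if no mosaic exists).\<close>
definition mosaic_number :: "(nat \<Rightarrow> mosaic \<Rightarrow> 'k \<Rightarrow> bool) \<Rightarrow> 'k \<Rightarrow> enat" where
  "mosaic_number depicts L =
     (INF n \<in> {n. \<exists>M. legendrian_knot_mosaic n M \<and> depicts n M L}. enat n)"

end

theory Submission imports Defs begin

text \<open>Since \<open>-tb \<le> N + C/2\<close>, it suffices to bound \<open>2N + C\<close>. Give every tile the weight
  \<open>2\<close> per crossing plus \<open>1\<close> per cusp, so each tile weighs at most \<open>2\<close>. On the boundary of a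
  suitably connected mosaic a tile can only be \<open>T2\<close> (top row, left column), \<open>T4\<close> (bottom row,
  right column) or weightless, and no two such weight-one tiles are adjacent along the frame.
  Hence the \<open>4(n-1)\<close> frame tiles weigh at most \<open>2(n-1)\<close> together, and with \<open>n = m + 2\<close> we get
  \<open>-tb \<le> m\<^sup>2 + m + 1\<close>, which rearranges to the claimed lower bound on \<open>n\<close>.\<close>

definition cusp_segs :: "tile \<Rightarrow> edge set set" where
  "cusp_segs t = {s \<in> segs t. s = {eT, eL} \<or> s = {eB, eR}}"

definition tile_weight :: "tile \<Rightarrow> nat" where
  "tile_weight t = 2 * of_bool (t = T10) + card (cusp_segs t)"

lemma cusp_segs_eq:
  "cusp_segs t = (case t of T2 \<Rightarrow> {{eB, eR}} | T4 \<Rightarrow> {{eT, eL}} | T8 \<Rightarrow> {{eB, eR}, {eT, eL}} | _ \<Rightarrow> {})"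
  by (cases t) (auto simp: cusp_segs_def)

lemma tile_weight_eq:
  "tile_weight t = (case t of T2 \<Rightarrow> 1 | T4 \<Rightarrow> 1 | T8 \<Rightarrow> 2 | T10 \<Rightarrow> 2 | _ \<Rightarrow> 0)"
  by (cases t) (simp_all add: tile_weight_def cusp_segs_eq doubleton_eq_iff)

lemma tile_weight_le_2: "tile_weight t \<le> 2"
  by (cases t) (simp_all add: tile_weight_eq)

lemma tile_weight_no_conn:
  "\<not> has_conn t eT \<Longrightarrow> tile_weight t = of_bool (t = T2)"
  "\<not> has_conn t eL \<Longrightarrow> tile_weight t = of_bool (t = T2)"
  "\<not> has_conn t eB \<Longrightarrow> tile_weight t = of_bool (t = T4)"
  "\<not> has_conn t eR \<Longrightarrow> tile_weight t = of_bool (t = T4)"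
  by (cases t; auto simp: tile_weight_eq has_conn_def)+

lemma has_conn_T2: "has_conn T2 eR" "has_conn T2 eB" "\<not> has_conn T2 eL" "\<not> has_conn T2 eT"
  by (auto simp: has_conn_def)

lemma has_conn_T4: "\<not> has_conn T4 eR" "\<not> has_conn T4 eB" "has_conn T4 eL" "has_conn T4 eT"
  by (auto simp: has_conn_def)

lemma sum_no_two_consecutive_le:
  assumes "\<And>j. j < k \<Longrightarrow> \<not> (p j \<and> p (Suc j))"
  shows "2 * (\<Sum>j<Suc k. of_bool (p j) :: nat) \<le> k + of_bool (p 0) + of_bool (p k)"
  using assms
proof (induction k)
  case 0
  then show ?case by simp
next
  case (Suc k)
  then have "2 * (\<Sum>j<Suc k. of_bool (p j) :: nat) \<le> k + of_bool (p 0) + of_bool (p k)"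
    and "\<not> (p k \<and> p (Suc k))"
    by auto
  then show ?case by (cases "p k"; cases "p (Suc k)") auto
qed

lemma sum_lessThan_Suc_Suc_split:
  "(\<Sum>i<Suc (Suc m). f i) = f 0 + (\<Sum>i<m. f (Suc i)) + (f (Suc m) :: 'a :: comm_monoid_add)"
proof -
  have "(\<Sum>i<Suc m. f i) = f 0 + (\<Sum>i<m. f (Suc i))"
    by (rule sum.lessThan_Suc_shift)
  then show ?thesis by (simp only: sum.lessThan_Suc[of f "Suc m"])
qed

lemma suitably_connectedD:
  assumes "suitably_connected n M" "i < n" "j < n"
  shows "has_conn (M i j) eR \<longleftrightarrow> j + 1 < n \<and> has_conn (M i (j + 1)) eL"
    and "has_conn (M i j) eL \<longleftrightarrow> 0 < j \<and> has_conn (M i (j - 1)) eR"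
    and "has_conn (M i j) eB \<longleftrightarrow> i + 1 < n \<and> has_conn (M (i + 1) j) eT"
    and "has_conn (M i j) eT \<longleftrightarrow> 0 < i \<and> has_conn (M (i - 1) j) eB"
  using assms unfolding suitably_connected_def by blast+

context
  fixes m :: nat and M :: mosaic
  assumes sc: "suitably_connected (Suc (Suc m)) M"
begin

private lemmas conn = suitably_connectedD[OF sc]

lemma top_row_weight:
  "2 * (\<Sum>j<Suc (Suc m). tile_weight (M 0 j)) \<le> Suc m + of_bool (M 0 0 = T2)"
proof -
  let ?p = "\<lambda>j. M 0 j = T2"
  have "2 * (\<Sum>j<Suc (Suc m). of_bool (?p j) :: nat) \<le> Suc m + of_bool (?p 0) + of_bool (?p (Suc m))"
  proof (rule sum_no_two_consecutive_le)
    fix j assume "j < Suc m"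
    then show "\<not> (?p j \<and> ?p (Suc j))"
      using conn(1)[of 0 j] has_conn_T2 by auto
  qed
  moreover have "\<not> ?p (Suc m)"
    using conn(1)[of 0 "Suc m"] has_conn_T2 by auto
  moreover have "(\<Sum>j<Suc (Suc m). tile_weight (M 0 j)) = (\<Sum>j<Suc (Suc m). of_bool (?p j))"
    using conn(4)[of 0] by (intro sum.cong) (auto simp: tile_weight_no_conn)
  ultimately show ?thesis by simp
qed

lemma bottom_row_weight:
  "2 * (\<Sum>j<Suc (Suc m). tile_weight (M (Suc m) j)) \<le> Suc m + of_bool (M (Suc m) (Suc m) = T4)"
proof -
  let ?p = "\<lambda>j. M (Suc m) j = T4"
  have "2 * (\<Sum>j<Suc (Suc m). of_bool (?p j) :: nat) \<le> Suc m + of_bool (?p 0) + of_bool (?p (Suc m))"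
  proof (rule sum_no_two_consecutive_le)
    fix j assume "j < Suc m"
    then show "\<not> (?p j \<and> ?p (Suc j))"
      using conn(2)[of "Suc m" "Suc j"] has_conn_T4 by auto
  qed
  moreover have "\<not> ?p 0"
    using conn(2)[of "Suc m" 0] has_conn_T4 by auto
  moreover have "(\<Sum>j<Suc (Suc m). tile_weight (M (Suc m) j)) = (\<Sum>j<Suc (Suc m). of_bool (?p j))"
    using conn(3)[of "Suc m"] by (intro sum.cong) (auto simp: tile_weight_no_conn)
  ultimately show ?thesis by simp
qed

lemma left_column_inner_weight:
  "2 * (\<Sum>i<m. tile_weight (M (Suc i) 0)) + of_bool (M 0 0 = T2) \<le> Suc m"
proof -
  let ?p = "\<lambda>i. M i 0 = T2"
  have "2 * (\<Sum>i<Suc (Suc m). of_bool (?p i) :: nat) \<le> Suc m + of_bool (?p 0) + of_bool (?p (Suc m))"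
  proof (rule sum_no_two_consecutive_le)
    fix j assume "j < Suc m"
    then show "\<not> (?p j \<and> ?p (Suc j))"
      using conn(3)[of j 0] has_conn_T2 by auto
  qed
  moreover have "\<not> ?p (Suc m)"
    using conn(3)[of "Suc m" 0] has_conn_T2 by auto
  moreover have "(\<Sum>i<m. tile_weight (M (Suc i) 0)) = (\<Sum>i<m. of_bool (?p (Suc i)))"
    using conn(2)[of _ 0] by (intro sum.cong) (auto simp: tile_weight_no_conn)
  moreover have "(\<Sum>i<Suc (Suc m). of_bool (?p i) :: nat)
      = of_bool (?p 0) + (\<Sum>i<m. of_bool (?p (Suc i))) + of_bool (?p (Suc m))"
    by (rule sum_lessThan_Suc_Suc_split)
  ultimately show ?thesis by simp
qed

lemma right_column_inner_weight:
  "2 * (\<Sum>i<m. tile_weight (M (Suc i) (Suc m))) + of_bool (M (Suc m) (Suc m) = T4) \<le> Suc m"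
proof -
  let ?p = "\<lambda>i. M i (Suc m) = T4"
  have "2 * (\<Sum>i<Suc (Suc m). of_bool (?p i) :: nat) \<le> Suc m + of_bool (?p 0) + of_bool (?p (Suc m))"
  proof (rule sum_no_two_consecutive_le)
    fix j assume "j < Suc m"
    then show "\<not> (?p j \<and> ?p (Suc j))"
      using conn(4)[of "Suc j" "Suc m"] has_conn_T4 by auto
  qed
  moreover have "\<not> ?p 0"
    using conn(4)[of 0 "Suc m"] has_conn_T4 by auto
  moreover have "(\<Sum>i<m. tile_weight (M (Suc i) (Suc m))) = (\<Sum>i<m. of_bool (?p (Suc i)))"
    using conn(1)[of _ "Suc m"] by (intro sum.cong) (auto simp: tile_weight_no_conn)
  moreover have "(\<Sum>i<Suc (Suc m). of_bool (?p i) :: nat)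
      = of_bool (?p 0) + (\<Sum>i<m. of_bool (?p (Suc i))) + of_bool (?p (Suc m))"
    by (rule sum_lessThan_Suc_Suc_split)
  ultimately show ?thesis by simp
qed

lemma total_weight_le:
  "(\<Sum>i<Suc (Suc m). \<Sum>j<Suc (Suc m). tile_weight (M i j)) \<le> 2 * m\<^sup>2 + 2 * m + 2"
proof -
  let ?w = "\<lambda>i j. tile_weight (M i j)"
  have inner: "(\<Sum>i<m. \<Sum>j<m. ?w (Suc i) (Suc j)) \<le> (\<Sum>i<m. \<Sum>j<m. 2)"
    by (intro sum_mono tile_weight_le_2)
  have "(\<Sum>i<Suc (Suc m). \<Sum>j<Suc (Suc m). ?w i j)
      = (\<Sum>j<Suc (Suc m). ?w 0 j) + (\<Sum>j<Suc (Suc m). ?w (Suc m) j)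
        + (\<Sum>i<m. ?w (Suc i) 0) + (\<Sum>i<m. ?w (Suc i) (Suc m))
        + (\<Sum>i<m. \<Sum>j<m. ?w (Suc i) (Suc j))"
    unfolding sum_lessThan_Suc_Suc_split sum.distrib by linarith
  with inner top_row_weight bottom_row_weight left_column_inner_weight right_column_inner_weight
  show ?thesis by (simp add: power2_eq_square)
qed

end

lemma knot_mosaic_size_ge_2:
  assumes "legendrian_knot_mosaic n M"
  shows "2 \<le> n"
proof -
  obtain ss where kt: "knot_traversal n M ss"
    using assms by (auto simp: legendrian_knot_mosaic_def)
  obtain i j a b where s0: "ss ! 0 = (i, j, a, b)"
    by (cases "ss ! 0") auto
  have "valid_oseg n M (ss ! 0)"
    using kt by (auto simp: knot_traversal_def)
  then have ij: "i < n" "j < n" and "{a, b} \<in> segs (M i j)"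
    by (simp_all add: s0 valid_oseg_def)
  then have conn: "has_conn (M i j) a"
    by (auto simp: has_conn_def)
  show "2 \<le> n"
  proof (rule ccontr)
    assume "\<not> 2 \<le> n"
    with ij have "n = 1" "i = 0" "j = 0" by auto
    with conn suitably_connectedD[of n M i j] assms show False
      by (cases a) (auto simp: legendrian_knot_mosaic_def)
  qed
qed

lemma total_weight_eq:
  "(\<Sum>i<n. \<Sum>j<n. tile_weight (M i j))
     = 2 * card {(i, j). i < n \<and> j < n \<and> M i j = T10} + num_cusps n M"
proof -
  have fin: "finite (cusp_segs t)" for t
    by (cases t) (auto simp: cusp_segs_def)
  have "num_cusps n M = card (SIGMA i:{..<n}. SIGMA j:{..<n}. cusp_segs (M i j))"
    unfolding num_cusps_def cusp_segs_def by (rule arg_cong[where f = card]) auto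
  also have "\<dots> = (\<Sum>i<n. \<Sum>j<n. card (cusp_segs (M i j)))"
    by (simp add: card_SigmaI fin finite_SigmaI)
  finally have cusps: "num_cusps n M = \<dots>" .
  have "{(i, j). i < n \<and> j < n \<and> M i j = T10} = (SIGMA i:{..<n}. {j. j < n \<and> M i j = T10})"
    by auto
  then have crossings: "card {(i, j). i < n \<and> j < n \<and> M i j = T10} = (\<Sum>i<n. \<Sum>j<n. of_bool (M i j = T10))"
    by (simp add: card_SigmaI Int_def)
  show ?thesis
    unfolding cusps crossings tile_weight_def by (simp add: sum.distrib sum_distrib_left mult.commute)
qed

lemma neg_front_tb_le:
  assumes "suitably_connected (Suc (Suc m)) M"
  shows "- front_tb (Suc (Suc m)) M ss \<le> real (m\<^sup>2 + m + 1)"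
proof -
  let ?n = "Suc (Suc m)"
  have "num_neg ?n M ss \<le> card {(i, j). i < ?n \<and> j < ?n \<and> M i j = T10}"
    unfolding num_neg_def by (rule card_mono) (auto intro: finite_subset[of _ "{..<?n} \<times> {..<?n}"])
  then have "2 * num_neg ?n M ss + num_cusps ?n M \<le> 2 * m\<^sup>2 + 2 * m + 2"
    using total_weight_le[OF assms] total_weight_eq[where n = ?n and M = M] by linarith
  then have "real (2 * num_neg ?n M ss + num_cusps ?n M) \<le> real (2 * m\<^sup>2 + 2 * m + 2)"
    by (rule of_nat_mono)
  then show ?thesis unfolding front_tb_def by simp
qed

lemma ceiling_sqrt_bound:
  fixes x :: real
  assumes "x \<le> real m ^ 2 + real m + 1"
  shows "nat \<lceil>sqrt (x - 3/4) + 3/2\<rceil> \<le> m + 2"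
proof -
  have "x - 3/4 \<le> (real m + 1/2)\<^sup>2"
    using assms by (simp add: power2_eq_square algebra_simps)
  then have "sqrt (x - 3/4) \<le> real m + 1/2"
    using real_sqrt_le_mono by fastforce
  then have "\<lceil>sqrt (x - 3/4) + 3/2\<rceil> \<le> int (m + 2)"
    by (simp add: ceiling_le_iff)
  then show ?thesis by linarith
qed

theorem theorem2p4:
  fixes depicts :: "nat \<Rightarrow> mosaic \<Rightarrow> 'k \<Rightarrow> bool"
    and tb :: "'k \<Rightarrow> int"
    and \<Lambda> :: 'k
  assumes tb_front: "\<And>n M ss. legendrian_knot_mosaic n M \<Longrightarrow> knot_traversal n M ss \<Longrightarrow>
                        depicts n M \<Lambda> \<Longrightarrow> real_of_int (tb \<Lambda>) = front_tb n M ss"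
    and tb_neg: "tb \<Lambda> < 0"
  shows "enat (nat \<lceil>sqrt (- real_of_int (tb \<Lambda>) - 3/4) + 3/2\<rceil>) \<le> mosaic_number depicts \<Lambda>"
  unfolding mosaic_number_def le_INF_iff
proof (intro ballI)
  fix n assume "n \<in> {n. \<exists>M. legendrian_knot_mosaic n M \<and> depicts n M \<Lambda>}"
  then obtain M where lk: "legendrian_knot_mosaic n M" and dp: "depicts n M \<Lambda>" by auto
  obtain ss where "knot_traversal n M ss"
    using lk by (auto simp: legendrian_knot_mosaic_def)
  then have tb_eq: "real_of_int (tb \<Lambda>) = front_tb n M ss"
    using tb_front lk dp by blast
  obtain m where n: "n = Suc (Suc m)"
    using knot_mosaic_size_ge_2[OF lk] by (metis add_2_eq_Suc le_Suc_ex)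
  have "- real_of_int (tb \<Lambda>) \<le> real m ^ 2 + real m + 1"
    using neg_front_tb_le[of m M ss] lk tb_eq n by (simp add: legendrian_knot_mosaic_def)
  then show "enat (nat \<lceil>sqrt (- real_of_int (tb \<Lambda>) - 3/4) + 3/2\<rceil>) \<le> enat n"
    using ceiling_sqrt_bound n by simp
qed

end
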